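(* Let $n=p'q$ where $p',q$ are distinct primes both at least $7$, and let $A=L(n;p')$. Then $D_A(n)=4$.
   Context: $\mathbb{Z}_n$ is the integers mod $n$, $U(n)$ its unit group. For nonempty $A\subseteq\mathbb{Z}_n\setminus\{0\}$, a sequence $(x_1,\ldots,x_k)$ is an $A$-weighted zero-sum sequence if $\sum a_ix_i=0$ for some $a_i\in A$; $D_A(n)$ is the least $k$ such that every length-$k$ sequence in $\mathbb{Z}_n$ has a nonempty $A$-weighted zero-sum subsequence. For odd $n=\prod p_i^{r_i}$, a prime $p\mid n$ and $a\in U(n)$, $\left(\frac{a}{p}\right)$ is the Legendre symbol of the image of $a$ in $\mathbb{Z}_p$ and $\left(\frac{a}{n}\right)=\prod\left(\frac{a}{p_i}\right)^{r_i}$. For a prime divisor $p'$ of $n$, $L(n;p')=\{a\in U(n): \left(\frac{a}{n}\right)=\left(\frac{a}{p'}\right)\}$. *)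

theory Defs
  imports "HOL-Number_Theory.Number_Theory"
begin

definition Zn :: "nat \<Rightarrow> int set" where
  "Zn n = {0..<int n}"

definition units_mod :: "nat \<Rightarrow> int set" where
  "units_mod n = {a \<in> Zn n. coprime a (int n)}"

definition jacobi_sym :: "int \<Rightarrow> nat \<Rightarrow> int" where
  "jacobi_sym a n = (\<Prod>p\<in>prime_factors n. Legendre a (int p) ^ multiplicity p n)"

definition L_set :: "nat \<Rightarrow> nat \<Rightarrow> int set" where
  "L_set n p' = {a \<in> units_mod n. jacobi_sym a n = Legendre a (int p')}"

definition has_weighted_zero_sum_subseq :: "nat \<Rightarrow> int set \<Rightarrow> int list \<Rightarrow> bool" where
  "has_weighted_zero_sum_subseq n A xs \<longleftrightarrow>
     (\<exists>I a. I \<subseteq> {..<length xs} \<and> I \<noteq> {} \<and> (\<forall>i\<in>I. a i \<in> A) \<and>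
        (\<Sum>i\<in>I. a i * xs ! i) mod int n = 0)"

definition D_weighted :: "int set \<Rightarrow> nat \<Rightarrow> nat" where
  "D_weighted A n = (LEAST k. \<forall>xs. length xs = k \<and> set xs \<subseteq> Zn n \<longrightarrow>
                              has_weighted_zero_sum_subseq n A xs)"

end

theory Submission
  imports Defs
begin

(* For n = p * q the set L(n;p) consists of the units a with (a/q) = 1, so by the Chinese
   remainder theorem a weighted zero sum modulo n is the same as a zero sum modulo p with unit
   weights together with a zero sum modulo q, on the same indices, with quadratic residue weights.
   Modulo p, k terms that are nonzero mod p admit a unit-weighted zero sum whenever 2 \<le> k < p;
   modulo q \<ge> 7, every sign pattern of Legendre symbols is realised by a triple summing to 0,
   so three terms nonzero mod q always admit a residue-weighted zero sum.  Among four terms one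
   can always choose a nonempty set of indices meeting both counting conditions, whence
   D_A(n) \<le> 4.  Conversely the sequence (q, p, p t) with (-t/q) = -1 has no weighted zero sum. *)

lemma Legendre_cong:
  assumes "[a = b] (mod p)"
  shows "Legendre a p = Legendre b p"
proof -
  have "QuadRes p a \<longleftrightarrow> QuadRes p b"
    unfolding QuadRes_def using assms cong_trans cong_sym by blast
  moreover have "[a = 0] (mod p) \<longleftrightarrow> [b = 0] (mod p)"
    using assms cong_trans cong_sym by blast
  ultimately show ?thesis
    unfolding Legendre_def by simp
qed

lemma Legendre_values: "Legendre a p \<in> {-1, 0, 1}"
  unfolding Legendre_def by auto

lemma Legendre_eq_0_iff: "Legendre a p = 0 \<longleftrightarrow> p dvd a"
  unfolding Legendre_def by (auto simp: cong_0_iff)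

lemma Legendre_not_dvd: "\<not> p dvd a \<Longrightarrow> Legendre a p \<in> {1, -1}"
  using Legendre_values[of a p] Legendre_eq_0_iff[of a p] by auto

lemma Legendre_mult:
  assumes "prime q" "q > 2"
  shows "Legendre (a * b) (int q) = Legendre a (int q) * Legendre b (int q)"
proof -
  let ?e = "(q - 1) div 2"
  let ?d = "Legendre (a * b) q - Legendre a q * Legendre b q"
  have "[Legendre (a * b) q = (a * b) ^ ?e] (mod q)"
    using euler_criterion[OF assms] .
  also have "(a * b) ^ ?e = a ^ ?e * b ^ ?e"
    by (rule power_mult_distrib)
  also have "[a ^ ?e * b ^ ?e = Legendre a q * Legendre b q] (mod q)"
    using euler_criterion[OF assms, of a] euler_criterion[OF assms, of b]
    by (intro cong_mult) (simp_all add: cong_sym)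
  finally have "int q dvd ?d"
    by (simp add: cong_iff_dvd_diff)
  moreover have "\<bar>?d\<bar> < int q"
    using Legendre_values[of "a * b" q] Legendre_values[of a q] Legendre_values[of b q] assms(2)
    by auto
  ultimately have "?d = 0"
    using dvd_imp_le_int[of ?d "int q"] by fastforce
  then show ?thesis
    by simp
qed

lemma Legendre_square:
  assumes "prime q" "\<not> int q dvd y"
  shows "Legendre (y^2) (int q) = 1"
proof -
  have "\<not> int q dvd y^2"
    using assms prime_dvd_power_int_iff by auto
  moreover have "QuadRes q (y^2)"
    unfolding QuadRes_def by (blast intro: cong_refl)
  ultimately show ?thesis
    unfolding Legendre_def by (simp add: cong_0_iff)
qed

lemma Legendre_one: "prime q \<Longrightarrow> Legendre 1 (int q) = 1"
  using Legendre_square[of q 1] by (simp add: prime_nat_iff)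

lemma nonresidue_exists:
  assumes "prime q" "q > 2"
  shows "\<exists>N. 0 < N \<and> N < int q \<and> Legendre N (int q) = -1"
proof -
  define S where "S = {1..int q - 1}"
  define sq where "sq x = x^2 mod int q" for x
  have not_dvd_of_S: "\<not> int q dvd x" if "x \<in> S" for x
    using that unfolding S_def by (auto dest: zdvd_imp_le)
  have mod_in_S: "x mod int q \<in> S" if "\<not> int q dvd x" for x
  proof -
    have "x mod int q \<noteq> 0" "0 \<le> x mod int q" "x mod int q < int q"
      using that assms(2) by (simp_all add: dvd_eq_mod_eq_0)
    then show ?thesis
      unfolding S_def by simp
  qed
  have sq_in_S: "sq x \<in> S" if "\<not> int q dvd x" for x
    using that mod_in_S[of "x^2"] prime_dvd_power_int_iff[of "int q" 2 x] assms(1)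
    unfolding sq_def by simp
  \<comment> \<open>squaring does not separate 1 and q - 1, so it misses some nonzero residue class\<close>
  have "(int q - 1)^2 = 1 + int q * (int q - 2)"
    by (simp add: power2_eq_square algebra_simps)
  then have "sq 1 = sq (int q - 1)"
    unfolding sq_def by simp
  moreover have "1 \<in> S" "int q - 1 \<in> S" "1 \<noteq> int q - 1"
    using assms(2) unfolding S_def by auto
  ultimately have "\<not> inj_on sq S"
    unfolding inj_on_def by blast
  moreover have "sq ` S \<subseteq> S"
    using sq_in_S not_dvd_of_S by blast
  moreover have "finite S"
    unfolding S_def by simp
  ultimately have "sq ` S \<noteq> S"
    using finite_surj_inj[of S sq] by blast
  then obtain N where N: "N \<in> S" "N \<notin> sq ` S"
    using \<open>sq ` S \<subseteq> S\<close> by blast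
  have "\<not> QuadRes q N"
  proof
    assume "QuadRes q N"
    then obtain y where y: "[y^2 = N] (mod int q)"
      unfolding QuadRes_def by blast
    have "\<not> int q dvd y"
    proof
      assume "int q dvd y"
      then have "int q dvd N"
        using cong_dvd_iff[OF y] by (simp add: power2_eq_square)
      then show False
        using not_dvd_of_S[OF N(1)] by blast
    qed
    moreover have "sq (y mod int q) = N"
      using y N(1) unfolding sq_def S_def cong_def by (simp add: power_mod)
    ultimately show False
      using N(2) mod_in_S by blast
  qed
  then have "Legendre N q = -1"
    using not_dvd_of_S[OF N(1)] unfolding Legendre_def by (simp add: cong_0_iff)
  moreover have "0 < N" "N < int q"
    using N(1) unfolding S_def by auto
  ultimately show ?thesis
    by blast
qed

lemma residue_nonresidue_consecutive:
  assumes "prime q" "q > 2"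
  shows "\<exists>k. Legendre k (int q) = 1 \<and> Legendre (k + 1) (int q) = -1"
proof -
  obtain N where N: "0 < N" "N < int q" "Legendre N q = -1"
    using nonresidue_exists[OF assms] by blast
  define P where "P m \<longleftrightarrow> 0 < m \<and> Legendre (int m) q = -1" for m
  define m where "m = (LEAST m. P m)"
  have "P (nat N)"
    using N unfolding P_def by simp
  then have m: "P m" "m \<le> nat N"
    unfolding m_def by (rule LeastI, rule Least_le)
  moreover have "m \<noteq> 1"
    using m(1) Legendre_one[OF assms(1)] unfolding P_def by auto
  ultimately have bounds: "0 < m - 1" "m - 1 < q"
    using N(2) unfolding P_def by auto
  have "\<not> P (m - 1)"
    using bounds(1) unfolding m_def by (intro not_less_Least) auto
  then have "Legendre (int (m - 1)) q \<noteq> -1"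
    using bounds(1) unfolding P_def by blast
  moreover have "\<not> int q dvd int (m - 1)"
    using bounds by (auto dest: zdvd_imp_le)
  ultimately have "Legendre (int (m - 1)) q = 1"
    using Legendre_not_dvd by blast
  moreover have "Legendre (int (m - 1) + 1) q = -1"
    using m(1) bounds(1) unfolding P_def by (simp add: of_nat_diff)
  ultimately show ?thesis
    by blast
qed

lemma zero_sum_triple_two_residues:
  assumes "prime q" "q \<ge> 7" "e \<in> {1, -1}"
  shows "\<exists>w1 w2 w3. Legendre w1 (int q) = 1 \<and> Legendre w2 (int q) = 1 \<and>
    Legendre w3 (int q) = e \<and> int q dvd w1 + w2 + w3"
proof -
  have q2: "q > 2"
    using assms(2) by simp
  have small_not_dvd: "\<not> int q dvd z" if "0 < z" "z < int q" for z
    using that by (auto dest: zdvd_imp_le)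
  define c where "c = Legendre (-1) q"
  have c: "c \<in> {1, -1}"
    unfolding c_def using Legendre_not_dvd small_not_dvd[of 1] q2 by simp
  \<comment> \<open>9 + 16 - 25 = 0 realises the signs (1, 1, c), and k + 1 - (k + 1) = 0 with k a residue
      and k + 1 a nonresidue realises (1, 1, -c); here q \<ge> 7 keeps 3, 4, 5 prime to q\<close>
  have L9: "Legendre 9 q = 1" and L16: "Legendre 16 q = 1"
    using Legendre_square[OF assms(1), of 3] Legendre_square[OF assms(1), of 4]
      small_not_dvd[of 3] small_not_dvd[of 4] assms(2) by simp_all
  have L25: "Legendre (-25) q = c"
    using Legendre_mult[OF assms(1) q2, of "-1" 25] Legendre_square[OF assms(1), of 5]
      small_not_dvd[of 5] assms(2) unfolding c_def by simp
  obtain k where k: "Legendre k q = 1" "Legendre (k + 1) q = -1"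
    using residue_nonresidue_consecutive[OF assms(1) q2] by blast
  have Lk: "Legendre (-(k + 1)) q = -c"
    using Legendre_mult[OF assms(1) q2, of "-1" "k + 1"] k(2) unfolding c_def by simp
  show ?thesis
  proof (cases "e = c")
    case True
    then show ?thesis
      using L9 L16 L25 by (intro exI[of _ 9] exI[of _ 16] exI[of _ "-25"]) simp
  next
    case False
    then have "e = -c"
      using c assms(3) by auto
    then show ?thesis
      using k(1) Lk Legendre_one[OF assms(1)]
      by (intro exI[of _ k] exI[of _ 1] exI[of _ "-(k + 1)"]) simp
  qed
qed

lemma zero_sum_triple_equal_signs:
  assumes "prime q" "q \<ge> 7" "e \<in> {1, -1}" "e3 \<in> {1, -1}"
  shows "\<exists>w1 w2 w3. Legendre w1 (int q) = e \<and> Legendre w2 (int q) = e \<and>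
    Legendre w3 (int q) = e3 \<and> int q dvd w1 + w2 + w3"
proof (cases "e = 1")
  case True
  then show ?thesis
    using zero_sum_triple_two_residues[OF assms(1,2,4)] by simp
next
  case False
  then have e: "e = -1"
    using assms(3) by auto
  have q2: "q > 2"
    using assms(2) by simp
  obtain N where N: "Legendre N q = -1"
    using nonresidue_exists[OF assms(1) q2] by blast
  have "-e3 \<in> {1, -1}"
    using assms(4) by auto
  then obtain w1 w2 w3 where w: "Legendre w1 q = 1" "Legendre w2 q = 1" "Legendre w3 q = -e3"
    "int q dvd w1 + w2 + w3"
    using zero_sum_triple_two_residues[OF assms(1,2)] by blast
  have "int q dvd N * w1 + N * w2 + N * w3"
    using dvd_mult[OF w(4), of N] by (simp add: algebra_simps)
  moreover have "Legendre (N * w1) q = -1" "Legendre (N * w2) q = -1" "Legendre (N * w3) q = e3"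
    using Legendre_mult[OF assms(1) q2] N w(1-3) by simp_all
  ultimately show ?thesis
    using e by blast
qed

lemma zero_sum_triple_signs:
  assumes "prime q" "q \<ge> 7" "e1 \<in> {1, -1}" "e2 \<in> {1, -1}" "e3 \<in> {1, -1}"
  shows "\<exists>w1 w2 w3. Legendre w1 (int q) = e1 \<and> Legendre w2 (int q) = e2 \<and>
    Legendre w3 (int q) = e3 \<and> int q dvd w1 + w2 + w3"
proof -
  consider "e1 = e2" | "e1 = e3" | "e2 = e3"
    using assms(3-5) by auto
  then show ?thesis
  proof cases
    case 1
    then show ?thesis
      using zero_sum_triple_equal_signs[OF assms(1,2,3,5)] by simp
  next
    case 2
    then obtain w1 w2 w3 where "Legendre w1 q = e1" "Legendre w2 q = e1" "Legendre w3 q = e2"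
      "int q dvd w1 + w2 + w3"
      using zero_sum_triple_equal_signs[OF assms(1,2,3,4)] by blast
    then show ?thesis
      using 2 by (intro exI[of _ w1] exI[of _ w3] exI[of _ w2]) (simp add: algebra_simps)
  next
    case 3
    then obtain w1 w2 w3 where "Legendre w1 q = e2" "Legendre w2 q = e2" "Legendre w3 q = e1"
      "int q dvd w1 + w2 + w3"
      using zero_sum_triple_equal_signs[OF assms(1,2,4,3)] by blast
    then show ?thesis
      using 3 by (intro exI[of _ w3] exI[of _ w1] exI[of _ w2]) (simp add: algebra_simps)
  qed
qed

lemma residue_weighted_zero_sum_three_terms:
  assumes "prime q" "q \<ge> 7" "\<not> int q dvd b1" "\<not> int q dvd b2" "\<not> int q dvd b3"
  shows "\<exists>s1 s2 s3. Legendre s1 (int q) = 1 \<and> Legendre s2 (int q) = 1 \<and>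
    Legendre s3 (int q) = 1 \<and> int q dvd s1 * b1 + s2 * b2 + s3 * b3"
proof -
  have q2: "q > 2"
    using assms(2) by simp
  have pq: "prime (int q)"
    using assms(1) by simp
  obtain w1 w2 w3 where w: "Legendre w1 q = Legendre b1 q" "Legendre w2 q = Legendre b2 q"
    "Legendre w3 q = Legendre b3 q" "int q dvd w1 + w2 + w3"
    using zero_sum_triple_signs[OF assms(1,2) Legendre_not_dvd Legendre_not_dvd Legendre_not_dvd]
      assms(3-5) by blast
  have not_dvd_products: "\<not> int q dvd b1 * b2" "\<not> int q dvd b2 * b3" "\<not> int q dvd b1 * b3"
    using assms(3-5) prime_dvd_mult_iff[OF pq] by auto
  have square_one: "Legendre b q * Legendre b q = 1" if "\<not> int q dvd b" for b
    using Legendre_not_dvd[OF that] by auto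
  \<comment> \<open>s_i = w_i b_i (b_j b_k)^2 is a residue and s_i b_i = w_i (b1 b2 b3)^2\<close>
  define s1 where "s1 = w1 * b1 * (b2 * b3)^2"
  define s2 where "s2 = w2 * b2 * (b1 * b3)^2"
  define s3 where "s3 = w3 * b3 * (b1 * b2)^2"
  have "Legendre s1 q = 1"
    unfolding s1_def using Legendre_mult[OF assms(1) q2] Legendre_square[OF assms(1) not_dvd_products(2)]
      w(1) square_one[OF assms(3)] by simp
  moreover have "Legendre s2 q = 1"
    unfolding s2_def using Legendre_mult[OF assms(1) q2] Legendre_square[OF assms(1) not_dvd_products(3)]
      w(2) square_one[OF assms(4)] by simp
  moreover have "Legendre s3 q = 1"
    unfolding s3_def using Legendre_mult[OF assms(1) q2] Legendre_square[OF assms(1) not_dvd_products(1)]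
      w(3) square_one[OF assms(5)] by simp
  moreover have "s1 * b1 + s2 * b2 + s3 * b3 = (w1 + w2 + w3) * (b1 * b2 * b3)^2"
    unfolding s1_def s2_def s3_def by (simp add: algebra_simps power2_eq_square)
  ultimately show ?thesis
    using w(4) by (metis dvd_mult2)
qed

lemma dvd_weighted_sum_from_subset:
  fixes u x :: "'a \<Rightarrow> 'b::comm_semiring_1"
  assumes "finite I" "K \<subseteq> I" "\<forall>i\<in>I - K. d dvd x i" "d dvd (\<Sum>i\<in>K. u i * x i)"
  shows "d dvd (\<Sum>i\<in>I. u i * x i)"
proof -
  have "(\<Sum>i\<in>I. u i * x i) = (\<Sum>i\<in>I - K. u i * x i) + (\<Sum>i\<in>K. u i * x i)"
    using sum.subset_diff[OF assms(2,1)] by simp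
  moreover have "d dvd (\<Sum>i\<in>I - K. u i * x i)"
    using assms(3) by (intro dvd_sum) simp
  ultimately show ?thesis
    using assms(4) by simp
qed

lemma unit_weighted_zero_sum_mod_prime:
  fixes x :: "'a \<Rightarrow> int"
  assumes "prime p" "finite I"
    and "card {i\<in>I. \<not> int p dvd x i} \<noteq> 1" "card {i\<in>I. \<not> int p dvd x i} < p"
  shows "\<exists>u. (\<forall>i\<in>I. \<not> int p dvd u i) \<and> int p dvd (\<Sum>i\<in>I. u i * x i)"
proof -
  define K where "K = {i\<in>I. \<not> int p dvd x i}"
  define k where "k = card K"
  have fK: "finite K" "K \<subseteq> I" and rest: "\<forall>i\<in>I - K. int p dvd x i"
    unfolding K_def using assms(2) by auto
  have pp: "prime (int p)"
    using assms(1) by simp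
  have not_dvd_1: "\<not> int p dvd 1"
    using pp by (simp add: prime_int_iff)
  show ?thesis
  proof (cases "K = {}")
    case True
    then show ?thesis
      using dvd_weighted_sum_from_subset[OF assms(2) fK(2) rest, of "\<lambda>_. 1"] not_dvd_1
      by (intro exI[of _ "\<lambda>_. 1"]) simp
  next
    case False
    then obtain i0 where i0: "i0 \<in> K"
      by blast
    have "k \<noteq> 0"
      using False fK(1) unfolding k_def by simp
    then have k: "2 \<le> k" "k < p"
      using assms(3,4) unfolding k_def K_def by auto
    \<comment> \<open>weights c_i times the product of the other terms, where c = (1 - k, 1, ..., 1) sums to 0
        and consists of units because 2 \<le> k < p\<close>
    define c where "c i = (if i = i0 then 1 - int k else 1)" for i
    define u where "u i = (if i \<in> K then c i * prod x (K - {i}) else 1)" for i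
    have "\<not> int p dvd 1 - int k"
    proof
      assume "int p dvd 1 - int k"
      then have "int p dvd int k - 1"
        by (metis dvd_minus_iff minus_diff_eq)
      then show False
        using k by (auto dest: zdvd_imp_le)
    qed
    then have "\<not> int p dvd c i" for i
      unfolding c_def using not_dvd_1 by simp
    moreover have "\<not> int p dvd prod x (K - {i})" for i
      using prime_dvd_prod_iff[OF _ pp, of "K - {i}" x] fK(1) unfolding K_def by auto
    ultimately have units: "\<forall>i\<in>I. \<not> int p dvd u i"
      unfolding u_def using not_dvd_1 prime_dvd_mult_iff[OF pp] by auto
    have remove: "prod x (K - {i}) * x i = prod x K" if "i \<in> K" for i
      using prod.remove[OF fK(1) that, of x] by (simp add: mult.commute)
    have "(\<Sum>i\<in>K. u i * x i) = (\<Sum>i\<in>K. c i * prod x K)"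
      using remove by (intro sum.cong) (simp_all add: u_def mult.assoc)
    also have "\<dots> = (\<Sum>i\<in>K. c i) * prod x K"
      by (simp add: sum_distrib_right)
    also have "(\<Sum>i\<in>K. c i) = c i0 + (\<Sum>i\<in>K - {i0}. c i)"
      using sum.remove[OF fK(1) i0] .
    also have "\<dots> = 0"
      using fK(1) i0 k unfolding c_def k_def by (simp add: of_nat_diff)
    finally have "int p dvd (\<Sum>i\<in>K. u i * x i)"
      by simp
    then show ?thesis
      using units dvd_weighted_sum_from_subset[OF assms(2) fK(2) rest] by blast
  qed
qed

lemma residue_weighted_zero_sum_mod_prime:
  fixes x :: "'a \<Rightarrow> int"
  assumes "prime q" "q \<ge> 7" "finite I" "card {i\<in>I. \<not> int q dvd x i} \<in> {0, 3}"
  shows "\<exists>s. (\<forall>i\<in>I. Legendre (s i) (int q) = 1) \<and> int q dvd (\<Sum>i\<in>I. s i * x i)"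
proof -
  define K where "K = {i\<in>I. \<not> int q dvd x i}"
  have fK: "finite K" "K \<subseteq> I" and rest: "\<forall>i\<in>I - K. int q dvd x i"
    unfolding K_def using assms(3) by auto
  have L1: "Legendre 1 q = 1"
    using Legendre_one[OF assms(1)] .
  consider "K = {}" | i j k where "K = {i, j, k}" "i \<noteq> j" "j \<noteq> k" "i \<noteq> k"
    using assms(4) fK(1) unfolding K_def by (auto simp: card_3_iff)
  then show ?thesis
  proof cases
    case 1
    then show ?thesis
      using dvd_weighted_sum_from_subset[OF assms(3) fK(2) rest, of "\<lambda>_. 1"] L1
      by (intro exI[of _ "\<lambda>_. 1"]) simp
  next
    case (2 i j k)
    then have "\<not> int q dvd x i" "\<not> int q dvd x j" "\<not> int q dvd x k"
      unfolding K_def by auto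
    then obtain s1 s2 s3 where s: "Legendre s1 q = 1" "Legendre s2 q = 1" "Legendre s3 q = 1"
      "int q dvd s1 * x i + s2 * x j + s3 * x k"
      using residue_weighted_zero_sum_three_terms[OF assms(1,2)] by blast
    define s where "s m = (if m = i then s1 else if m = j then s2 else if m = k then s3 else 1)" for m
    have "(\<Sum>m\<in>K. s m * x m) = s1 * x i + s2 * x j + s3 * x k"
      using 2 unfolding s_def by (simp add: algebra_simps)
    then show ?thesis
      using dvd_weighted_sum_from_subset[OF assms(3) fK(2) rest, of s] s L1
      by (intro exI[of _ s]) (simp add: s_def)
  qed
qed

lemma four_indices_selection:
  fixes P Q :: "nat \<Rightarrow> bool"
  shows "\<exists>I \<subseteq> {..<4}. I \<noteq> {} \<and> card {i\<in>I. P i} \<noteq> 1 \<and> card {i\<in>I. Q i} \<in> {0, 3}"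
proof -
  define C :: "nat set set" where "C = {{0}, {1}, {2}, {3}, {0, 1}, {0, 2}, {0, 3}, {1, 2}, {1, 3},
    {2, 3}, {0, 1, 2}, {0, 1, 3}, {0, 2, 3}, {1, 2, 3}, {0, 1, 2, 3}}"
  have "\<exists>I \<in> C. (\<Sum>i\<in>I. if P i then 1 else 0 :: nat) \<noteq> 1 \<and>
      (\<Sum>i\<in>I. if Q i then 1 else 0 :: nat) \<in> {0, 3}"
    unfolding C_def
    by (cases "P 0"; cases "P 1"; cases "P 2"; cases "P 3";
        cases "Q 0"; cases "Q 1"; cases "Q 2"; cases "Q 3") simp_all
  then obtain I where I: "I \<in> C" "(\<Sum>i\<in>I. if P i then 1 else 0 :: nat) \<noteq> 1"
    "(\<Sum>i\<in>I. if Q i then 1 else 0 :: nat) \<in> {0, 3}"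
    by blast
  have "I \<subseteq> {..<4}" "I \<noteq> {}" "finite I"
    using I(1) unfolding C_def by auto
  moreover have "card {i\<in>I. R i} = (\<Sum>i\<in>I. if R i then 1 else 0)" for R
    using \<open>finite I\<close> by (simp add: sum.If_cases Int_def conj_commute)
  ultimately show ?thesis
    using I(2,3) by (intro exI[of _ I]) simp
qed

lemma coprime_prime_right_iff:
  fixes p a :: int
  assumes "prime p"
  shows "coprime a p \<longleftrightarrow> \<not> p dvd a"
proof
  show "\<not> p dvd a" if "coprime a p"
    using that coprime_absorb_right[of p a] assms by (auto dest: not_prime_unit)
  show "coprime a p" if "\<not> p dvd a"
    using prime_imp_coprime[OF assms that] by (simp add: coprime_commute)
qed

lemma jacobi_sym_prime_product:
  assumes "prime p" "prime q" "p \<noteq> q"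
  shows "jacobi_sym a (p * q) = Legendre a (int p) * Legendre a (int q)"
proof -
  have "prime_factors (p * q) = {p, q}"
    using prime_factors_product[of p q] assms by (auto simp: prime_gt_0_nat prime_prime_factors)
  moreover have "multiplicity p (p * q) = 1" "multiplicity q (p * q) = 1"
    using assms by (simp_all add: prime_elem_multiplicity_mult_distrib prime_multiplicity_other
        prime_gt_0_nat)
  ultimately show ?thesis
    unfolding jacobi_sym_def using assms(3) by simp
qed

lemma L_set_prime_product_iff:
  assumes "prime p" "prime q" "p \<noteq> q" "n = p * q"
  shows "a \<in> L_set n p \<longleftrightarrow> 0 \<le> a \<and> a < int n \<and> \<not> int p dvd a \<and> Legendre a (int q) = 1"
proof -
  have "coprime a (int n) \<longleftrightarrow> \<not> int p dvd a \<and> \<not> int q dvd a"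
    using assms coprime_prime_right_iff[of "int p" a] coprime_prime_right_iff[of "int q" a] by simp
  moreover have "Legendre a p \<noteq> 0" if "\<not> int p dvd a"
    using that Legendre_eq_0_iff by simp
  ultimately show ?thesis
    unfolding L_set_def units_mod_def Zn_def
    using jacobi_sym_prime_product[OF assms(1-3), of a] assms(4) Legendre_eq_0_iff[of a q] by auto
qed

lemma has_weighted_zero_sum_subseq_by_crt:
  assumes "prime p" "prime q" "p \<noteq> q" "n = p * q"
    and "I \<subseteq> {..<length xs}" "I \<noteq> {}"
    and "\<forall>i\<in>I. \<not> int p dvd u i" "\<forall>i\<in>I. Legendre (s i) (int q) = 1"
    and "int p dvd (\<Sum>i\<in>I. u i * xs ! i)" "int q dvd (\<Sum>i\<in>I. s i * xs ! i)"
  shows "has_weighted_zero_sum_subseq n (L_set n p) xs"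
proof -
  have cop: "coprime (int p) (int q)"
    using assms(1-3) by (simp add: primes_coprime)
  have "\<forall>i. \<exists>b. [b = u i] (mod int p) \<and> [b = s i] (mod int q)"
    using binary_chinese_remainder_int[OF cop] by blast
  then obtain b where b: "\<And>i. [b i = u i] (mod int p) \<and> [b i = s i] (mod int q)"
    by metis
  define a where "a i = b i mod int n" for i
  have ap: "[a i = u i] (mod int p)" and aq: "[a i = s i] (mod int q)" for i
    using b[of i] assms(4) unfolding a_def cong_def by (simp_all add: mod_mod_cancel)
  have n_pos: "int n > 0"
    using assms(1,2,4) by (simp add: prime_gt_0_nat)
  have a_in_L: "a i \<in> L_set n p" if "i \<in> I" for i
  proof -
    have "\<not> int p dvd a i"
      using cong_dvd_iff[OF ap[of i]] assms(7) that by simp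
    moreover have "Legendre (a i) q = 1"
      using Legendre_cong[OF aq[of i]] assms(8) that by simp
    moreover have "0 \<le> a i" "a i < int n"
      unfolding a_def using n_pos by simp_all
    ultimately show ?thesis
      using L_set_prime_product_iff[OF assms(1-4)] by blast
  qed
  have "[(\<Sum>i\<in>I. a i * xs ! i) = (\<Sum>i\<in>I. u i * xs ! i)] (mod int p)"
    by (intro cong_sum cong_mult ap cong_refl)
  then have "int p dvd (\<Sum>i\<in>I. a i * xs ! i)"
    using assms(9) cong_dvd_iff by blast
  moreover have "[(\<Sum>i\<in>I. a i * xs ! i) = (\<Sum>i\<in>I. s i * xs ! i)] (mod int q)"
    by (intro cong_sum cong_mult aq cong_refl)
  then have "int q dvd (\<Sum>i\<in>I. a i * xs ! i)"
    using assms(10) cong_dvd_iff by blast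
  ultimately have "int n dvd (\<Sum>i\<in>I. a i * xs ! i)"
    using divides_mult[OF _ _ cop] assms(4) by simp
  then show ?thesis
    unfolding has_weighted_zero_sum_subseq_def using assms(5,6) a_in_L
    by (intro exI[of _ I] exI[of _ a]) (simp add: dvd_eq_mod_eq_0)
qed

lemma has_weighted_zero_sum_subseq_length_four:
  assumes "prime p" "prime q" "p \<noteq> q" "p > 4" "q \<ge> 7" "n = p * q" "length xs = 4"
  shows "has_weighted_zero_sum_subseq n (L_set n p) xs"
proof -
  obtain I where I: "I \<subseteq> {..<4}" "I \<noteq> {}" "card {i\<in>I. \<not> int p dvd xs ! i} \<noteq> 1"
    "card {i\<in>I. \<not> int q dvd xs ! i} \<in> {0, 3}"
    using four_indices_selection[of "\<lambda>i. \<not> int p dvd xs ! i" "\<lambda>i. \<not> int q dvd xs ! i"] by blast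
  have "finite I"
    using I(1) finite_subset by blast
  have "card {i\<in>I. \<not> int p dvd xs ! i} \<le> card {..<4::nat}"
    using I(1) by (intro card_mono) auto
  then have "card {i\<in>I. \<not> int p dvd xs ! i} < p"
    using assms(4) by simp
  then obtain u where u: "\<forall>i\<in>I. \<not> int p dvd u i" "int p dvd (\<Sum>i\<in>I. u i * xs ! i)"
    using unit_weighted_zero_sum_mod_prime[OF assms(1) \<open>finite I\<close> I(3)] by blast
  obtain s where s: "\<forall>i\<in>I. Legendre (s i) (int q) = 1" "int q dvd (\<Sum>i\<in>I. s i * xs ! i)"
    using residue_weighted_zero_sum_mod_prime[OF assms(2,5) \<open>finite I\<close> I(4)] by blast
  have "I \<subseteq> {..<length xs}"
    using I(1) assms(7) by simp
  then show ?thesis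
    using has_weighted_zero_sum_subseq_by_crt[OF assms(1,2,3,6) _ I(2) u(1) s(1) u(2) s(2)] by blast
qed

lemma no_weighted_zero_sum_subseq_three_terms:
  assumes "prime p" "prime q" "p \<noteq> q" "q > 2" "n = p * q" "Legendre (-t) (int q) = -1"
  shows "\<not> has_weighted_zero_sum_subseq n (L_set n p) [int q, int p, int p * t]"
proof
  let ?xs = "[int q, int p, int p * t]"
  assume "has_weighted_zero_sum_subseq n (L_set n p) ?xs"
  then obtain I a where I_lt: "I \<subseteq> {..<length ?xs}" and I_ne: "I \<noteq> {}"
    and a_in_L: "\<forall>i\<in>I. a i \<in> L_set n p" and zero_sum: "(\<Sum>i\<in>I. a i * ?xs ! i) mod int n = 0"
    unfolding has_weighted_zero_sum_subseq_def by (elim exE conjE) (rule that)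
  have I: "I \<subseteq> {0, 1, 2}" "I \<noteq> {}"
    using I_lt I_ne by auto
  have a: "\<not> int p dvd a i" "Legendre (a i) q = 1" if "i \<in> I" for i
    using a_in_L that L_set_prime_product_iff[OF assms(1-3,5)] by blast+
  have pp: "prime (int p)" and pq: "prime (int q)"
    using assms(1,2) by simp_all
  have not_dvd_pq: "\<not> int p dvd int q" "\<not> int q dvd int p"
    using assms(1-3) primes_dvd_imp_eq by (metis int_dvd_int_iff)+
  have not_dvd_t: "\<not> int q dvd t"
    using assms(6) Legendre_eq_0_iff[of "-t" q] by auto
  define R where "R = (if 1 \<in> I then a 1 else 0) + (if 2 \<in> I then a 2 * t else 0)"
  have "(\<Sum>i\<in>I. a i * ?xs ! i) = (\<Sum>i\<in>{0, 1, 2}. if i \<in> I then a i * ?xs ! i else 0)"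
    using sum.inter_restrict[of "{0, 1, 2::nat}" "\<lambda>i. a i * ?xs ! i" I] I(1)
    by (simp add: Int_absorb1)
  also have "\<dots> = (if 0 \<in> I then a 0 * int q else 0) + int p * R"
    unfolding R_def by (simp add: algebra_simps)
  finally have sum_eq: "(\<Sum>i\<in>I. a i * ?xs ! i) = (if 0 \<in> I then a 0 * int q else 0) + int p * R" .
  have "int p * int q dvd (\<Sum>i\<in>I. a i * ?xs ! i)"
    using zero_sum assms(5) by (simp add: dvd_eq_mod_eq_0)
  then have dvd_p: "int p dvd (\<Sum>i\<in>I. a i * ?xs ! i)" and dvd_q: "int q dvd (\<Sum>i\<in>I. a i * ?xs ! i)"
    by (auto intro: dvd_mult_left dvd_mult_right)
  \<comment> \<open>modulo p only the term q is visible, and modulo q the remaining terms force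
      (a_1/q) = (-a_2 t/q) = -1\<close>
  have "0 \<notin> I"
  proof
    assume "0 \<in> I"
    then have "int p dvd a 0 * int q"
      using dvd_p sum_eq by (simp add: dvd_add_left_iff)
    then show False
      using prime_dvd_mult_iff[OF pp] not_dvd_pq a(1)[OF \<open>0 \<in> I\<close>] by blast
  qed
  then have "int q dvd int p * R"
    using dvd_q sum_eq by simp
  then have dvd_R: "int q dvd R"
    using prime_dvd_mult_iff[OF pq] not_dvd_pq by blast
  consider "1 \<in> I" "2 \<in> I" | "1 \<in> I" "2 \<notin> I" | "1 \<notin> I" "2 \<in> I"
    using I \<open>0 \<notin> I\<close> by auto
  then show False
  proof cases
    case 1
    then have "[a 1 = a 2 * (-t)] (mod int q)"
      using dvd_R unfolding R_def by (simp add: cong_iff_dvd_diff)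
    then have "Legendre (a 1) q = Legendre (a 2 * (-t)) q"
      by (rule Legendre_cong)
    also have "\<dots> = Legendre (a 2) q * Legendre (-t) q"
      by (rule Legendre_mult[OF assms(2,4)])
    finally show False
      using a(2) 1 assms(6) by simp
  next
    case 2
    then have "int q dvd a 1"
      using dvd_R unfolding R_def by simp
    then show False
      using a(2)[OF 2(1)] Legendre_eq_0_iff[of "a 1" q] by simp
  next
    case 3
    then have "int q dvd a 2 * t"
      using dvd_R unfolding R_def by simp
    then have "int q dvd a 2"
      using prime_dvd_mult_iff[OF pq] not_dvd_t by blast
    then show False
      using a(2)[OF 3(2)] Legendre_eq_0_iff[of "a 2" q] by simp
  qed
qed

lemma sequence_without_weighted_zero_sum_exists:
  assumes "prime p" "prime q" "p \<noteq> q" "q > 2" "n = p * q"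
  shows "\<exists>xs. length xs = 3 \<and> set xs \<subseteq> Zn n \<and> \<not> has_weighted_zero_sum_subseq n (L_set n p) xs"
proof -
  obtain N where N: "0 < N" "N < int q" "Legendre N q = -1"
    using nonresidue_exists[OF assms(2,4)] by blast
  define t where "t = int q - N"
  have "[-t = N] (mod int q)"
    unfolding t_def cong_def by simp
  then have "Legendre (-t) q = -1"
    using Legendre_cong N(3) by metis
  moreover have "set [int q, int p, int p * t] \<subseteq> Zn n"
  proof -
    have "int q * 1 < int q * int p" "int p * 1 < int p * int q" "int p * t < int p * int q"
      using N assms(1,2) prime_gt_1_nat[of p] prime_gt_1_nat[of q] unfolding t_def
      by (intro mult_strict_left_mono; simp)+
    moreover have "0 \<le> int p * t"
      using N unfolding t_def by simp
    ultimately show ?thesis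
      unfolding Zn_def assms(5) by (auto simp: mult.commute)
  qed
  ultimately show ?thesis
    using no_weighted_zero_sum_subseq_three_terms[OF assms]
    by (intro exI[of _ "[int q, int p, int p * t]"]) simp
qed

lemma has_weighted_zero_sum_subseq_append:
  assumes "has_weighted_zero_sum_subseq n A ys"
  shows "has_weighted_zero_sum_subseq n A (ys @ zs)"
proof -
  obtain I a where I: "I \<subseteq> {..<length ys}" "I \<noteq> {}" "\<forall>i\<in>I. a i \<in> A"
    and zero_sum: "(\<Sum>i\<in>I. a i * ys ! i) mod int n = 0"
    using assms unfolding has_weighted_zero_sum_subseq_def by (elim exE conjE) (rule that)
  have "(\<Sum>i\<in>I. a i * (ys @ zs) ! i) = (\<Sum>i\<in>I. a i * ys ! i)"
    using I(1) by (intro sum.cong) (auto simp: nth_append)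
  then show ?thesis
    unfolding has_weighted_zero_sum_subseq_def using I zero_sum
    by (intro exI[of _ I] exI[of _ a]) auto
qed

theorem theorem3p8:
  fixes p' q n :: nat
  assumes "prime p'" and "prime q" and "p' \<noteq> q"
    and "p' \<ge> 7" and "q \<ge> 7"
    and "n = p' * q"
  shows "D_weighted (L_set n p') n = 4"
  unfolding D_weighted_def
proof (rule Least_equality)
  show "\<forall>xs. length xs = 4 \<and> set xs \<subseteq> Zn n \<longrightarrow> has_weighted_zero_sum_subseq n (L_set n p') xs"
    using has_weighted_zero_sum_subseq_length_four[OF assms(1-3) _ assms(5,6)] assms(4) by simp
next
  fix k
  assume all_k: "\<forall>xs. length xs = k \<and> set xs \<subseteq> Zn n \<longrightarrow> has_weighted_zero_sum_subseq n (L_set n p') xs"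
  obtain xs where xs: "length xs = 3" "set xs \<subseteq> Zn n" "\<not> has_weighted_zero_sum_subseq n (L_set n p') xs"
    using sequence_without_weighted_zero_sum_exists[OF assms(1-3) _ assms(6)] assms(5) by auto
  show "4 \<le> k"
  proof (rule ccontr)
    assume "\<not> 4 \<le> k"
    then have "length (take k xs) = k" "set (take k xs) \<subseteq> Zn n"
      using xs(1,2) set_take_subset[of k xs] by auto
    then have "has_weighted_zero_sum_subseq n (L_set n p') (take k xs @ drop k xs)"
      using all_k has_weighted_zero_sum_subseq_append by blast
    then show False
      using xs(3) by simp
  qed
qed

end
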